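(* Let $(M,\Sigma)$ be a measurable space, $r\ge1$, and $\mu_1,\dots,\mu_r$ non-atomic countably additive finite measures on $\Sigma$. For $k\ge1$ let $t(k)=k\bmod r$ if this is nonzero and $t(k)=r$ otherwise. Let $(H_k)_{k\ge1}$ be a sequence of measurable sets such that for every $k$: $H_k\subseteq M\setminus\bigcup_{i=1}^{k-1}H_i$, $H_k$ admits a strong solution (a partition $H_k=F_1\sqcup\dots\sqcup F_r$ with $\mu_i(F_i)\ge\mu_i(F_j)$ for all $i,j$), and $\mu_{t(k)}(H_k)\ge 2^{-(r-1)}\mu_{t(k)}\bigl(M\setminus\bigcup_{i=1}^{k-1}H_i\bigr)$. Let $M_\infty=M\setminus\bigcup_{i=1}^\infty H_i$. Then $\mu_j(M_\infty)=0$ for every $j\in\{1,\dots,r\}$. *)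

theory Defs
  imports "HOL-Analysis.Analysis"
begin

definition non_atomic :: "'a measure \<Rightarrow> bool" where
  "non_atomic \<mu> \<longleftrightarrow>
     (\<forall>A\<in>sets \<mu>. emeasure \<mu> A > 0 \<longrightarrow>
        (\<exists>B\<in>sets \<mu>. B \<subseteq> A \<and> 0 < emeasure \<mu> B \<and> emeasure \<mu> B < emeasure \<mu> A))"

definition tidx :: "nat \<Rightarrow> nat \<Rightarrow> nat" where
  "tidx r k = (if k mod r \<noteq> 0 then k mod r else r)"

definition strong_solution ::
  "'a measure \<Rightarrow> (nat \<Rightarrow> 'a measure) \<Rightarrow> nat \<Rightarrow> 'a set \<Rightarrow> (nat \<Rightarrow> 'a set) \<Rightarrow> bool" where
  "strong_solution M \<mu> r H F \<longleftrightarrow>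
     (\<forall>i\<in>{1..r}. F i \<in> sets M) \<and>
     disjoint_family_on F {1..r} \<and>
     (\<Union>i\<in>{1..r}. F i) = H \<and>
     (\<forall>i\<in>{1..r}. \<forall>j\<in>{1..r}. emeasure (\<mu> i) (F i) \<ge> emeasure (\<mu> i) (F j))"

definition admits_strong_solution ::
  "'a measure \<Rightarrow> (nat \<Rightarrow> 'a measure) \<Rightarrow> nat \<Rightarrow> 'a set \<Rightarrow> bool" where
  "admits_strong_solution M \<mu> r H \<longleftrightarrow> (\<exists>F. strong_solution M \<mu> r H F)"

end

theory Submission
  imports Defs
begin

text \<open>Fix \<open>j\<close>. The sets \<open>H (n * r + j)\<close> are pairwise
  disjoint, \<open>tidx r (n * r + j) = j\<close>, and the part of the space not yet exhausted before
  step \<open>n * r + j\<close> contains \<open>M_inf\<close>. So these disjoint sets all have \<open>\<mu>\<^sub>j\<close>-measure at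
  least \<open>2 ^ (1 - r) * \<mu>\<^sub>j(M_inf)\<close>. Because \<open>\<mu>\<^sub>j\<close> is finite, their measures are summable
  and hence tend to zero, which forces \<open>\<mu>\<^sub>j(M_inf) = 0\<close>.\<close>

lemma tidx_mult_add:
  assumes "j \<in> {1..r}"
  shows "tidx r (n * r + j) = j"
proof (cases "j = r")
  case False
  with assms have "(n * r + j) mod r = j" by simp
  with assms show ?thesis unfolding tidx_def by simp
qed (simp add: tidx_def)

lemma disjoint_family_on_if_subset_diff_earlier:
  fixes H :: "nat \<Rightarrow> 'a set"
  assumes "\<And>k. k \<ge> 1 \<Longrightarrow> H k \<subseteq> S - (\<Union>i\<in>{1..<k}. H i)"
  shows "disjoint_family_on H {1..}"
  unfolding disjoint_family_on_def
proof (intro ballI impI)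
  fix a b :: nat assume "a \<in> {1..}" "b \<in> {1..}" "a \<noteq> b"
  then consider "1 \<le> a" "a < b" | "1 \<le> b" "b < a" by fastforce
  then show "H a \<inter> H b = {}"
    by cases (use assms[of a] assms[of b] in auto)
qed

lemma disjoint_family_arith_progression:
  fixes H :: "nat \<Rightarrow> 'a set"
  assumes "disjoint_family_on H {1..}" "r \<ge> 1" "j \<ge> 1"
  shows "disjoint_family (\<lambda>n. H (n * r + j))"
  unfolding disjoint_family_on_def
proof (intro ballI impI)
  fix m n :: nat assume "m \<noteq> n"
  with assms(2) have "m * r + j \<noteq> n * r + j" by simp
  with assms(3) show "H (m * r + j) \<inter> H (n * r + j) = {}"
    by (intro disjoint_family_onD[OF assms(1)]) auto
qed

lemma (in finite_measure) emeasure_zero_if_disjoint_family_bounded_below: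
  fixes G :: "nat \<Rightarrow> 'a set"
  assumes "c > 0" "A \<in> sets M" "range G \<subseteq> sets M" "disjoint_family G"
    and bound: "\<And>n. ennreal c * emeasure M A \<le> emeasure M (G n)"
  shows "emeasure M A = 0"
proof -
  have "(\<lambda>n. measure M (G n)) sums measure M (\<Union>n. G n)"
    using assms(3,4) by (rule finite_measure_UNION)
  then have "(\<lambda>n. measure M (G n)) \<longlonglongrightarrow> 0"
    by (intro summable_LIMSEQ_zero sums_summable)
  moreover have "c * measure M A \<le> measure M (G n)" for n
    using bound[of n] \<open>c > 0\<close> by (simp add: emeasure_eq_measure ennreal_mult[symmetric])
  ultimately have "c * measure M A \<le> 0"
    by (intro LIMSEQ_le_const) auto
  with \<open>c > 0\<close> show ?thesis
    by (simp add: emeasure_eq_measure mult_le_0_iff measure_le_0_iff)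
qed

theorem corollary3:
  fixes M :: "'a measure" and \<mu> :: "nat \<Rightarrow> 'a measure" and r :: nat
    and H :: "nat \<Rightarrow> 'a set"
  assumes r: "r \<ge> 1"
    and sets_eq: "\<And>i. i \<in> {1..r} \<Longrightarrow> sets (\<mu> i) = sets M"
    and fin: "\<And>i. i \<in> {1..r} \<Longrightarrow> finite_measure (\<mu> i)"
    and na: "\<And>i. i \<in> {1..r} \<Longrightarrow> non_atomic (\<mu> i)"
    and H_meas: "\<And>k. k \<ge> 1 \<Longrightarrow> H k \<in> sets M"
    and H_sub: "\<And>k. k \<ge> 1 \<Longrightarrow> H k \<subseteq> space M - (\<Union>i\<in>{1..<k}. H i)"
    and H_strong: "\<And>k. k \<ge> 1 \<Longrightarrow> admits_strong_solution M \<mu> r (H k)"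
    and H_big: "\<And>k. k \<ge> 1 \<Longrightarrow>
       emeasure (\<mu> (tidx r k)) (H k)
         \<ge> ennreal ((1/2) ^ (r - 1)) * emeasure (\<mu> (tidx r k)) (space M - (\<Union>i\<in>{1..<k}. H i))"
  shows "\<forall>j\<in>{1..r}. emeasure (\<mu> j) (space M - (\<Union>i\<in>{1..}. H i)) = 0"
proof
  fix j assume j: "j \<in> {1..r}"
  interpret finite_measure "\<mu> j" using fin[OF j] .
  have sets_j: "sets (\<mu> j) = sets M" using sets_eq[OF j] .
  have H_sets: "H k \<in> sets (\<mu> j)" if "k \<ge> 1" for k
    using H_meas[OF that] sets_j by simp
  have space_j: "space (\<mu> j) = space M" using sets_eq_imp_space_eq[OF sets_j] .
  let ?c = "ennreal ((1/2) ^ (r - 1))" and ?M_inf = "space M - (\<Union>i\<in>{1..}. H i)"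
  have M_inf_sets: "?M_inf \<in> sets (\<mu> j)"
    unfolding space_j[symmetric] using H_sets by (intro sets.Diff sets.top sets.countable_UN') auto
  have "?c * emeasure (\<mu> j) ?M_inf \<le> emeasure (\<mu> j) (H (n * r + j))" for n
  proof -
    let ?rest = "space M - (\<Union>i\<in>{1..<n * r + j}. H i)"
    have "?rest \<in> sets (\<mu> j)"
      unfolding space_j[symmetric] using H_sets by (intro sets.Diff sets.top sets.finite_UN) auto
    then have "?c * emeasure (\<mu> j) ?M_inf \<le> ?c * emeasure (\<mu> j) ?rest"
      by (intro mult_left_mono emeasure_mono) auto
    also have "\<dots> \<le> emeasure (\<mu> j) (H (n * r + j))"
      using H_big[of "n * r + j"] j by (simp add: tidx_mult_add)
    finally show ?thesis .
  qed
  moreover have "disjoint_family (\<lambda>n. H (n * r + j))"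
    using disjoint_family_on_if_subset_diff_earlier[OF H_sub] r j
    by (intro disjoint_family_arith_progression) auto
  ultimately show "emeasure (\<mu> j) ?M_inf = 0"
    using M_inf_sets H_sets j
    by (intro emeasure_zero_if_disjoint_family_bounded_below[where c = "(1/2) ^ (r - 1)"]) auto
qed

end
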